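(* Assume (H2.4) and (H3.1). Let $N\in\mathbb{N}$. If the operator $I_{X^{+}}-\mathcal{L}_{N}^{+}\mathcal{F}_{s}V^{+}\colon X^{+}\to X^{+}$ is invertible, then for each $\phi\in\widehat{X}$ the equation $$z=\mathcal{L}_{N}^{+}\mathcal{F}_{s}V(\phi,z)$$ has a unique solution $w^{\ast}\in X^{+}$, the equation $$Z=R_{N}^{+}\mathcal{F}_{s}V(\phi,P_{N}^{+}Z)$$ has a unique solution $Z^{\ast}\in X_{N}^{+}$, and $Z^{\ast}=R_{N}^{+}w^{\ast}$ and $w^{\ast}=P_{N}^{+}Z^{\ast}$ hold.
   Context: Let $d\ge 1$ be an integer and $\tau>0$, $h>0$ real. $X$, $X^{+}$, $X^{\pm}$ are real normed spaces of functions $[-\tau,0]\to\mathbb{R}^{d}$, $[0,h]\to\mathbb{R}^{d}$, $[-\tau,h]\to\mathbb{R}^{d}$, respectively. $V\colon X\times X^{+}\to X^{\pm}$ and $\mathcal{F}_{s}\colon X^{\pm}\to X^{+}$ are linear operators, and $V^{-}\colon X\to X^{\pm}$, $V^{+}\colon X^{+}\to X^{\pm}$ are $V^{-}\phi:=V(\phi,0_{X^{+}})$, $V^{+}z:=V(0_{X},z)$, so that $V(\phi,z)=V^{-}\phi+V^{+}z$. Let $\widetilde{X}^{+}$ be a linear subspace of $X^{+}$. For $N\in\mathbb{N}$, $X_{N}^{+}$ is a finite-dimensional space (identified with $\mathbb{R}^{d(N+1)}$), $R_{N}^{+}\colon\widetilde{X}^{+}\to X_{N}^{+}$ and $P_{N}^{+}\colon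 X_{N}^{+}\to X^{+}$ are linear with $R_{N}^{+}P_{N}^{+}=I_{X_{N}^{+}}$, and $\mathcal{L}_{N}^{+}:=P_{N}^{+}R_{N}^{+}$. Hypothesis (H2.4): there is a linear subspace $\widehat{X}^{+}\subseteq\widetilde{X}^{+}$ with a norm making it complete, such that the range of $\mathcal{F}_{s}V^{+}\colon X^{+}\to X^{+}$ is contained in $\widehat{X}^{+}$ and $\mathcal{F}_{s}V^{+}\colon X^{+}\to\widehat{X}^{+}$ is bounded. Hypothesis (H3.1): there is a linear subspace $\widehat{X}\subseteq X$ with a norm making it complete such that the range of $\mathcal{F}_{s}V^{-}$ restricted to $\widehat{X}$ is contained in $\widehat{X}^{+}$ and $\mathcal{F}_{s}V^{-}|_{\widehat{X}}\colon\widehat{X}\to\widehat{X}^{+}$ is bounded. *)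

theory Defs
  imports "HOL-Analysis.Analysis"
begin

definition banach_subspace :: "'a::real_vector set \<Rightarrow> ('a \<Rightarrow> real) \<Rightarrow> bool" where
  "banach_subspace S nS \<longleftrightarrow>
     subspace S \<and>
     (\<forall>x\<in>S. 0 \<le> nS x) \<and>
     (\<forall>x\<in>S. nS x = 0 \<longleftrightarrow> x = 0) \<and>
     (\<forall>x\<in>S. \<forall>c::real. nS (c *\<^sub>R x) = \<bar>c\<bar> * nS x) \<and>
     (\<forall>x\<in>S. \<forall>y\<in>S. nS (x + y) \<le> nS x + nS y) \<and>
     (\<forall>u::nat \<Rightarrow> 'a. (\<forall>n. u n \<in> S) \<longrightarrow>
        (\<forall>e>0. \<exists>M. \<forall>m\<ge>M. \<forall>n\<ge>M. nS (u m - u n) < e) \<longrightarrow>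
        (\<exists>l\<in>S. \<forall>e>0. \<exists>M. \<forall>n\<ge>M. nS (u n - l) < e))"

definition linear_on :: "'a::real_vector set \<Rightarrow> ('a \<Rightarrow> 'b::real_vector) \<Rightarrow> bool" where
  "linear_on D T \<longleftrightarrow>
     (\<forall>x\<in>D. \<forall>y\<in>D. T (x + y) = T x + T y) \<and>
     (\<forall>x\<in>D. \<forall>c::real. T (c *\<^sub>R x) = c *\<^sub>R T x)"

end

theory Submission
  imports Defs
begin

text \<open>Since \<open>V\<close> and \<open>F\<^sub>s\<close> are linear and \<open>R\<^sub>N\<^sup>+\<close> is linear on its domain, the equation
  \<open>z = L\<^sub>N\<^sup>+ F\<^sub>s V(\<phi>, z)\<close> is affine, \<open>z = L a + L B z\<close> with \<open>L = P\<^sub>N\<^sup>+ R\<^sub>N\<^sup>+\<close>,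
  \<open>a = F\<^sub>s V\<^sup>- \<phi>\<close> and \<open>B = F\<^sub>s V\<^sup>+\<close>; invertibility of \<open>I - L B\<close> gives exactly one solution.
  With \<open>G z = R\<^sub>N\<^sup>+ F\<^sub>s V(\<phi>, z)\<close> the two equations are the fixed-point equations of
  \<open>P\<^sub>N\<^sup>+ \<circ> G\<close> and \<open>G \<circ> P\<^sub>N\<^sup>+\<close>, whose fixed points correspond through \<open>G\<close> and \<open>P\<^sub>N\<^sup>+\<close>.
  Of (H2.4) and (H3.1) only the range inclusions are needed: they put \<open>a\<close> and \<open>B z\<close>
  into the domain on which \<open>R\<^sub>N\<^sup>+\<close> is linear.\<close>

lemma ex1_affine_fixed_point_if_bij_diff:
  fixes A :: "'a::ab_group_add \<Rightarrow> 'a"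
  assumes "bij (\<lambda>z. z - A z)"
  shows "\<exists>!z. z = c + A z"
proof -
  have "z = c + A z \<longleftrightarrow> z - A z = c" for z
    by (auto simp: algebra_simps)
  moreover have "\<exists>!z. z - A z = c"
    using assms by (simp add: bij_iff)
  ultimately show ?thesis
    by simp
qed

lemma unique_fixed_point_comp_swap:
  assumes "P (G w) = w"
    and unique: "\<And>z. P (G z) = z \<Longrightarrow> z = w"
    and "G (P Y) = Y"
  shows "Y = G w"
proof -
  have "P (G (P Y)) = P Y"
    using \<open>G (P Y) = Y\<close> by simp
  then have "P Y = w"
    by (rule unique)
  then show ?thesis
    using \<open>G (P Y) = Y\<close> by simp
qed

lemma linear_on_add:
  assumes "linear_on D T" "x \<in> D" "y \<in> D"
  shows "T (x + y) = T x + T y"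
  using assms unfolding linear_on_def by blast

theorem corollary4p2:
  fixes V :: "'x::real_normed_vector \<times> 'xp::real_normed_vector \<Rightarrow> 'xpm::real_normed_vector"
    and Fs :: "'xpm \<Rightarrow> 'xp"
    and Xt :: "'xp set"
    and Xhp :: "'xp set" and nhp :: "'xp \<Rightarrow> real"
    and Xh :: "'x set" and nh :: "'x \<Rightarrow> real"
    and R :: "'xp \<Rightarrow> 'n::euclidean_space"
    and P :: "'n \<Rightarrow> 'xp"
    and d N :: nat
    and \<phi> :: 'x
  assumes d_pos: "d \<ge> 1"
    and dimN: "DIM('n) = d * (N + 1)"
    and V_lin: "linear V"
    and Fs_lin: "linear Fs"
    and Xt_sub: "subspace Xt"
    and R_lin: "linear_on Xt R"
    and P_lin: "linear P"
    and P_range: "\<And>Z. P Z \<in> Xt"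
    and RP: "\<And>Z. R (P Z) = Z"
    \<comment> \<open>(H2.4)\<close>
    and H24_space: "banach_subspace Xhp nhp"
    and H24_sub: "Xhp \<subseteq> Xt"
    and H24_range: "\<And>z. Fs (V (0, z)) \<in> Xhp"
    and H24_bdd: "\<exists>K. \<forall>z. nhp (Fs (V (0, z))) \<le> K * norm z"
    \<comment> \<open>(H3.1)\<close>
    and H31_space: "banach_subspace Xh nh"
    and H31_sub: "Xh \<subseteq> UNIV"
    and H31_range: "\<And>\<psi>. \<psi> \<in> Xh \<Longrightarrow> Fs (V (\<psi>, 0)) \<in> Xhp"
    and H31_bdd: "\<exists>K. \<forall>\<psi>\<in>Xh. nhp (Fs (V (\<psi>, 0))) \<le> K * nh \<psi>"
    \<comment> \<open>invertibility of I - L_N^+ F_s V^+ on X^+\<close>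
    and inv: "bij (\<lambda>z. z - P (R (Fs (V (0, z)))))"
    and phi: "\<phi> \<in> Xh"
  shows "\<exists>w Z. (P (R (Fs (V (\<phi>, w)))) = w \<and> (\<forall>z. z = P (R (Fs (V (\<phi>, z)))) \<longrightarrow> z = w))
             \<and> (Z = R (Fs (V (\<phi>, P Z))) \<and> (\<forall>Y. Y = R (Fs (V (\<phi>, P Y))) \<longrightarrow> Y = Z))
             \<and> Z = R w \<and> w = P Z"
proof -
  define a where "a = Fs (V (\<phi>, 0))"
  define B where "B z = Fs (V (0, z))" for z
  define G where "G z = R (Fs (V (\<phi>, z)))" for z
  have split: "Fs (V (\<phi>, z)) = a + B z" for z
    using linear_add[OF V_lin, of "(\<phi>, 0)" "(0, z)"] linear_add[OF Fs_lin]
    by (simp add: a_def B_def)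
  have a_Xt: "a \<in> Xt" and B_Xt: "B z \<in> Xt" for z
    using H31_range[OF phi] H24_range H24_sub by (auto simp: a_def B_def)
  have affine: "P (G z) = P (R a) + P (R (B z))" for z
    using linear_on_add[OF R_lin a_Xt B_Xt] linear_add[OF P_lin] by (simp add: G_def split)
  obtain w where w_fixed: "P (G w) = w" and w_unique: "\<And>z. P (G z) = z \<Longrightarrow> z = w"
    using ex1_affine_fixed_point_if_bij_diff[OF inv[folded B_def], of "P (R a)"]
    by (metis affine)
  define Z where "Z = G w"
  have "w = P Z"
    using w_fixed by (simp add: Z_def)
  moreover have "Z = R w"
    using RP w_fixed by (metis Z_def)
  moreover have "Z = G (P Z)"
    using w_fixed by (simp add: Z_def)
  moreover have "Y = Z" if "Y = G (P Y)" for Y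
    using unique_fixed_point_comp_swap[of P G w, OF w_fixed w_unique] that by (simp add: Z_def)
  ultimately show ?thesis
    using w_fixed w_unique unfolding G_def by metis
qed

end
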